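(* Let $r\ge3$ be odd and $q=\exp(i\pi/r)$ (so all $\epsilon_n=1$). Then the embeddings of $V_q$ into $\mathbb{C}$ are exactly $e_1\mapsto 2i\cos(k\pi/r)$ for $k=1,\dots,r-1$, the subalgebra $V_q^+$ is totally real, and for every $g\ge 0$ $$\epsilon(\Omega^g)=\operatorname{tr}_{V_q}(\Omega^{g-1})=\Big(\frac r2\Big)^{g-1}\sum_{k=1}^{r-1}\sin\Big(\frac{k\pi}{r}\Big)^{2-2g}.$$ More precisely, at the embedding associated to $t=\exp(ik\pi/r)$ (with $e_1\mapsto i(t+t^{-1})$) one has $\Omega\mapsto\frac{-2r}{(t-t^{-1})^2}$.
   Context: For $q=\exp(i\pi/r)$ the signed Verlinde algebra $V_q$ is the commutative $\mathbb{Q}$-algebra with basis $e_0=1,e_1,\dots,e_{r-2}$ and multiplication determined by $e_1e_n=e_{n+1}-e_{n-1}$ ($e_{-1}=e_{r-1}=0$); equivalently $V_q\cong\mathbb{Q}[X]/(U_{r-1})$ via $X\mapsto e_1$, where $U_0=1$, $U_1=X$, $U_{n+1}=XU_n+U_{n-1}$, so that $U_n(i(t+t^{-1}))=i^n\frac{t^{n+1}-t^{-n-1}}{t-t^{-1}}$. It is a Frobenius algebra with $\eta$ diagonal in the basis $(e_n)$, $\eta(e_n,e_n)=(-1)^n$, counit $\epsilon(f)=\eta(f,e_0)$, and $\Omega=\sum_{n=0}^{r-2}(-1)^ne_n^2$. $V_q^+$ is the subalgebra spanned by $e_0,e_2,\dots,e_{r-3}$. $\operatorname{tr}_{V_q}(a)$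 denotes the trace of multiplication by $a$. *)

theory Defs
  imports Complex_Main "HOL-Computational_Algebra.Polynomial"
begin

fun Ucheb :: "nat \<Rightarrow> 'a::comm_ring_1 poly" where
  "Ucheb 0 = 1"
| "Ucheb (Suc 0) = [:0, 1:]"
| "Ucheb (Suc (Suc n)) = [:0, 1:] * Ucheb (Suc n) + Ucheb n"

text \<open>The signed Verlinde algebra V_q (q = exp(i pi/r)) realised as Q[X]/(U_(r-1)):
  its carrier is the set of rational polynomials of degree < r - 1 (reduced representatives).\<close>
definition Vcarrier :: "nat \<Rightarrow> rat poly set" where
  "Vcarrier r = {p. p = 0 \<or> degree p < r - 1}"

definition Vmult :: "nat \<Rightarrow> rat poly \<Rightarrow> rat poly \<Rightarrow> rat poly" where
  "Vmult r a b = (a * b) mod Ucheb (r - 1)"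

definition Vone :: "nat \<Rightarrow> rat poly" where
  "Vone r = 1 mod Ucheb (r - 1)"

text \<open>Basis element e_n (corresponds to U_n under X \<mapsto> e_1).\<close>
definition Ve :: "nat \<Rightarrow> nat \<Rightarrow> rat poly" where
  "Ve r n = Ucheb n mod Ucheb (r - 1)"

definition Vcoord :: "nat \<Rightarrow> rat poly \<Rightarrow> nat \<Rightarrow> rat" where
  "Vcoord r f = (THE c. (\<forall>n\<ge>r - 1. c n = 0) \<and> f = (\<Sum>n<r - 1. smult (c n) (Ve r n)))"

definition Veta :: "nat \<Rightarrow> rat poly \<Rightarrow> rat poly \<Rightarrow> rat" where
  "Veta r f g = (\<Sum>n<r - 1. (-1) ^ n * Vcoord r f n * Vcoord r g n)"

definition Vcounit :: "nat \<Rightarrow> rat poly \<Rightarrow> rat" where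
  "Vcounit r f = Veta r f (Ve r 0)"

definition VOmega :: "nat \<Rightarrow> rat poly" where
  "VOmega r = (\<Sum>n<r - 1. smult ((-1) ^ n) (Vmult r (Ve r n) (Ve r n)))"

definition Vtrace :: "nat \<Rightarrow> rat poly \<Rightarrow> rat" where
  "Vtrace r a = (\<Sum>n<r - 1. Vcoord r (Vmult r a (Ve r n)) n)"

fun Vpow :: "nat \<Rightarrow> rat poly \<Rightarrow> nat \<Rightarrow> rat poly" where
  "Vpow r a 0 = Vone r"
| "Vpow r a (Suc n) = Vmult r a (Vpow r a n)"

definition Vinv :: "nat \<Rightarrow> rat poly \<Rightarrow> rat poly" where
  "Vinv r a = (THE b. b \<in> Vcarrier r \<and> Vmult r a b = Vone r)"

definition Vzpow :: "nat \<Rightarrow> rat poly \<Rightarrow> int \<Rightarrow> rat poly" where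
  "Vzpow r a k = (if k \<ge> 0 then Vpow r a (nat k) else Vpow r (Vinv r a) (nat (- k)))"

definition Vplus :: "nat \<Rightarrow> rat poly set" where
  "Vplus r = {f \<in> Vcarrier r. \<forall>n. odd n \<longrightarrow> Vcoord r f n = 0}"

definition is_embedding_on :: "nat \<Rightarrow> rat poly set \<Rightarrow> (rat poly \<Rightarrow> complex) \<Rightarrow> bool" where
  "is_embedding_on r S \<phi> \<longleftrightarrow>
     \<phi> (Vone r) = 1 \<and>
     (\<forall>a\<in>S. \<forall>b\<in>S. \<phi> (a + b) = \<phi> a + \<phi> b) \<and>
     (\<forall>a\<in>S. \<forall>b\<in>S. \<phi> (Vmult r a b) = \<phi> a * \<phi> b) \<and>
     (\<forall>c. \<forall>a\<in>S. \<phi> (smult c a) = of_rat c * \<phi> a)"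

definition Veval :: "complex \<Rightarrow> rat poly \<Rightarrow> complex" where
  "Veval z f = poly (map_poly of_rat f) z"

end

theory Submission
  imports Defs
begin

(* Substituting X = 2i cos x gives sin x * U_n(X) = i^n sin((n + 1) x), so the nodes
   z_k = 2i cos(k pi / r), k = 1..r-1, are the r - 1 distinct roots of U_(r-1) and evaluation at
   them identifies V_q with C^(r-1). Discrete orthogonality of the sines sin(a k pi / r) turns into
   sum_k U_m(z_k) U_n(z_k) / Omega(z_k) = (-1)^n delta_mn, where Omega(z_k) = r / (2 sin^2(k pi / r)).
   This determines the coordinates in the basis (e_n): eps(f) = sum_k f(z_k) / Omega(z_k) and
   tr(f) = sum_k f(z_k), so both sides of the identity equal sum_k Omega(z_k)^(g-1).
   An embedding is determined by the image z of e_1 (on V_q^+, by a square root z of the image of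
   e_1^2); comparing the images of e_1^(r-1) and of its reduction modulo U_(r-1) shows U_(r-1)(z) = 0,
   so z is a node, and z^2 = -4 cos^2(k pi / r) is real. *)

section \<open>Chebyshev polynomials\<close>

lemma Ucheb_monic:
  "degree (Ucheb n :: 'a::{comm_ring_1,ring_no_zero_divisors} poly) = n \<and> coeff (Ucheb n :: 'a poly) n = 1"
proof (induction n rule: Ucheb.induct)
  case (3 n)
  have "degree (pCons 0 (Ucheb (Suc n)) :: 'a poly) = Suc (Suc n)"
    using 3 by (auto simp: degree_pCons_eq_if)
  then show ?case
    using 3 by (simp add: degree_add_eq_left coeff_eq_0)
qed auto

lemma degree_Ucheb [simp]: "degree (Ucheb n :: 'a::{comm_ring_1,ring_no_zero_divisors} poly) = n"
  using Ucheb_monic by blast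

lemma coeff_Ucheb_degree [simp]: "coeff (Ucheb n :: 'a::{comm_ring_1,ring_no_zero_divisors} poly) n = 1"
  using Ucheb_monic by blast

lemma Ucheb_nonzero [simp]: "Ucheb n \<noteq> (0 :: 'a::{comm_ring_1,ring_no_zero_divisors} poly)"
  using coeff_Ucheb_degree[of n, where 'a='a] by (metis coeff_0 zero_neq_one)

lemma coeff_Ucheb_parity: "odd (n + j) \<Longrightarrow> coeff (Ucheb n :: 'a::comm_ring_1 poly) j = 0"
  by (induction n arbitrary: j rule: Ucheb.induct) (auto simp: coeff_pCons odd_pos split: nat.splits)

lemma Ucheb_expansion:
  fixes f :: "'a::{comm_ring_1,ring_no_zero_divisors} poly"
  assumes "\<forall>j\<ge>m. coeff f j = 0"
  shows "\<exists>c. f = (\<Sum>n<m. smult (c n) (Ucheb n))"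
  using assms
proof (induction m arbitrary: f)
  case 0
  then show ?case by (auto intro: poly_eqI)
next
  case (Suc m)
  define g where "g = f - smult (coeff f m) (Ucheb m)"
  have "\<forall>j\<ge>m. coeff g j = 0"
  proof (intro allI impI)
    fix j assume "m \<le> j"
    then consider "j = m" | "Suc m \<le> j" by linarith
    then show "coeff g j = 0"
      by cases (use Suc.prems in \<open>auto simp: g_def coeff_eq_0\<close>)
  qed
  then obtain c where "g = (\<Sum>n<m. smult (c n) (Ucheb n))"
    using Suc.IH by blast
  then have "f = (\<Sum>n<Suc m. smult ((c(m := coeff f m)) n) (Ucheb n))"
    by (simp add: g_def algebra_simps)
  then show ?case by blast
qed

lemma poly_Ucheb_cos:
  "complex_of_real (sin x) * poly (Ucheb n) (2 * \<i> * complex_of_real (cos x))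
     = \<i> ^ n * complex_of_real (sin (real (Suc n) * x))"
proof (induction n rule: Ucheb.induct)
  case 2
  have "sin (real (Suc 1) * x) = 2 * sin x * cos x"
    using sin_double[of x] by simp
  then show ?case
    by (simp add: algebra_simps)
next
  case (3 n)
  have trig: "sin (real (n + 1) * x) - 2 * sin (real (n + 2) * x) * cos x = - sin (real (n + 3) * x)"
    using sin_times_cos[of "real (n + 2) * x" x] by (simp add: algebra_simps)
  have "complex_of_real (sin x) * poly (Ucheb (Suc (Suc n))) (2 * \<i> * complex_of_real (cos x))
      = 2 * \<i> * cos x * (\<i> ^ Suc n * sin (real (n + 2) * x)) + \<i> ^ n * sin (real (n + 1) * x)"
    using 3 by (simp add: algebra_simps)
  also have "\<dots> = \<i> ^ n * complex_of_real (sin (real (n + 1) * x) - 2 * sin (real (n + 2) * x) * cos x)"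
    by (simp add: algebra_simps)
  also have "\<dots> = \<i> ^ Suc (Suc n) * sin (real (n + 3) * x)"
    by (simp only: trig) simp
  finally show ?case by (simp add: numeral_eq_Suc)
qed simp

section \<open>Chebyshev nodes and discrete orthogonality\<close>

definition node_angle :: "nat \<Rightarrow> nat \<Rightarrow> real" where
  "node_angle r k = real k * pi / real r"

definition Ucheb_node :: "nat \<Rightarrow> nat \<Rightarrow> complex" where
  "Ucheb_node r k = 2 * \<i> * complex_of_real (cos (node_angle r k))"

definition Omega_value :: "nat \<Rightarrow> nat \<Rightarrow> real" where
  "Omega_value r k = real r / (2 * sin (node_angle r k) ^ 2)"

lemma node_angle_0 [simp]: "node_angle r 0 = 0"
  by (simp add: node_angle_def)

lemma node_angle_mult_commute: "real a * node_angle r k = real k * node_angle r a"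
  by (simp add: node_angle_def)

lemma sin_half_times_sum_cos:
  "2 * sin (x / 2) * (\<Sum>k<n. cos (real k * x)) = sin ((real n - 1 / 2) * x) + sin (x / 2)"
proof -
  define f where "f k = sin ((real k - 1 / 2) * x)" for k
  have "2 * sin (x / 2) * cos (real k * x) = f (Suc k) - f k" for k
    using sin_diff_sin[of "(real k + 1 / 2) * x" "(real k - 1 / 2) * x"]
    by (simp add: f_def algebra_simps)
  then have "2 * sin (x / 2) * (\<Sum>k<n. cos (real k * x)) = f n - f 0"
    by (simp add: sum_distrib_left sum_lessThan_telescope)
  then show ?thesis
    by (simp add: f_def)
qed

lemma sum_cos_multiples:
  assumes "0 < j" "j < 2 * r"
  shows "(\<Sum>k<r. cos (real j * node_angle r k)) = (1 - (-1) ^ j) / 2"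
proof -
  define x where "x = node_angle r j"
  have "0 < x / 2" "x / 2 < pi"
    using assms by (auto simp: x_def node_angle_def field_simps)
  then have s: "sin (x / 2) > 0"
    by (rule sin_gt_zero)
  have "sin ((real r - 1 / 2) * x) = sin (real j * pi - x / 2)"
    using assms by (simp add: x_def node_angle_def algebra_simps)
  also have "\<dots> = - ((-1) ^ j * sin (x / 2))"
    by (simp add: sin_diff)
  finally have "2 * sin (x / 2) * (\<Sum>k<r. cos (real k * x)) = - ((-1) ^ j * sin (x / 2)) + sin (x / 2)"
    by (simp only: sin_half_times_sum_cos)
  also have "\<dots> = (1 - (-1) ^ j) * sin (x / 2)"
    by (simp add: algebra_simps)
  finally have "(2 * (\<Sum>k<r. cos (real k * x))) * sin (x / 2) = (1 - (-1) ^ j) * sin (x / 2)"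
    by (simp add: mult_ac)
  then have "(\<Sum>k<r. cos (real k * x)) = (1 - (-1) ^ j) / 2"
    using s by simp
  then show ?thesis
    by (simp add: x_def node_angle_mult_commute)
qed

lemma sum_sin_mult_sin:
  assumes "a \<in> {1..r - 1}" "b \<in> {1..r - 1}"
  shows "(\<Sum>k=1..r - 1. sin (real a * node_angle r k) * sin (real b * node_angle r k))
           = (if a = b then real r / 2 else 0)"
  using assms
proof (induction a b rule: linorder_wlog)
  case (le a b)
  have range: "{..<r} = insert 0 {1..r - 1}"
    using le by auto
  define S where "S k = sin (real a * node_angle r k) * sin (real b * node_angle r k)" for k
  define C where "C j = (\<Sum>k<r. cos (real j * node_angle r k))" for j
  have "2 * S k = cos (real (b - a) * node_angle r k) - cos (real (a + b) * node_angle r k)" for k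
    using le sin_times_sin[of "real b * node_angle r k" "real a * node_angle r k"]
    by (simp add: S_def of_nat_diff algebra_simps)
  then have "2 * (\<Sum>k<r. S k) = C (b - a) - C (a + b)"
    by (simp add: C_def sum_distrib_left sum_subtractf)
  moreover have "(\<Sum>k<r. S k) = (\<Sum>k=1..r - 1. S k)"
    by (simp add: range S_def)
  moreover have "C (a + b) = (1 - (-1) ^ (a + b)) / 2"
    unfolding C_def using le by (intro sum_cos_multiples) auto
  moreover have "C (b - a) = (if a = b then real r else (1 - (-1) ^ (b - a)) / 2)"
  proof (cases "a = b")
    case False
    then have "C (b - a) = (1 - (-1) ^ (b - a)) / 2"
      unfolding C_def using le by (intro sum_cos_multiples) auto
    then show ?thesis
      using False by simp
  qed (simp add: C_def)
  moreover have "(-1::real) ^ (a + b) = (-1) ^ (b - a)"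
  proof -
    have "a + b = (b - a) + 2 * a"
      using le by simp
    then show ?thesis
      by (simp only: power_add power_mult) simp
  qed
  ultimately have "(\<Sum>k=1..r - 1. S k) = (if a = b then real r / 2 else 0)"
    by (auto simp: power_add)
  then show ?case
    by (simp only: S_def)
next
  case (sym a b)
  have "(\<Sum>k=1..r - 1. sin (real a * node_angle r k) * sin (real b * node_angle r k))
      = (\<Sum>k=1..r - 1. sin (real b * node_angle r k) * sin (real a * node_angle r k))"
    by (simp add: mult.commute)
  with sym show ?case
    by auto
qed

lemma sin_node_angle_pos: "k \<in> {1..r - 1} \<Longrightarrow> 0 < sin (node_angle r k)"
  unfolding node_angle_def by (rule sin_gt_zero) (auto simp: field_simps)

lemma Omega_value_pos: "k \<in> {1..r - 1} \<Longrightarrow> 0 < Omega_value r k"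
  using sin_node_angle_pos[of k r] by (auto simp: Omega_value_def)

lemma poly_Ucheb_node:
  assumes "k \<in> {1..r - 1}"
  shows "poly (Ucheb n) (Ucheb_node r k)
           = \<i> ^ n * complex_of_real (sin (real (Suc n) * node_angle r k) / sin (node_angle r k))"
proof -
  have "complex_of_real (sin (node_angle r k)) \<noteq> 0"
    using sin_node_angle_pos[OF assms] by simp
  then show ?thesis
    using poly_Ucheb_cos[of "node_angle r k" n] unfolding Ucheb_node_def
    by (simp add: field_simps del: of_nat_Suc)
qed

lemma Ucheb_node_root:
  assumes "k \<in> {1..r - 1}"
  shows "poly (Ucheb (r - 1)) (Ucheb_node r k) = 0"
proof -
  have "Suc (r - 1) = r" "r > 0"
    using assms by auto
  then have "real (Suc (r - 1)) * node_angle r k = real k * pi"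
    by (simp add: node_angle_def)
  then show ?thesis
    using assms by (simp only: poly_Ucheb_node) simp
qed

lemma node_angle_bounds: "k \<le> r \<Longrightarrow> 0 \<le> node_angle r k \<and> node_angle r k \<le> pi"
  by (cases "r = 0") (auto simp: node_angle_def field_simps)

lemma inj_on_Ucheb_node: "inj_on (Ucheb_node r) {1..r - 1}"
proof (rule inj_onI)
  fix k l assume k: "k \<in> {1..r - 1}" and l: "l \<in> {1..r - 1}" and eq: "Ucheb_node r k = Ucheb_node r l"
  have "cos (node_angle r k) = cos (node_angle r l)"
    using eq by (simp add: Ucheb_node_def)
  moreover have "0 \<le> node_angle r k" "node_angle r k \<le> pi" "0 \<le> node_angle r l" "node_angle r l \<le> pi"
    using node_angle_bounds[of k r] node_angle_bounds[of l r] k l by auto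
  ultimately have "node_angle r k = node_angle r l"
    using cos_inj_pi by blast
  moreover have "r > 0"
    using k by auto
  ultimately show "k = l"
    by (simp add: node_angle_def)
qed

lemma Ucheb_roots: "poly (Ucheb (r - 1)) z = 0 \<longleftrightarrow> (\<exists>k\<in>{1..r - 1}. z = Ucheb_node r k)"
proof
  assume z: "poly (Ucheb (r - 1)) z = 0"
  show "\<exists>k\<in>{1..r - 1}. z = Ucheb_node r k"
  proof (rule ccontr)
    assume "\<not> ?thesis"
    then have "z \<notin> Ucheb_node r ` {1..r - 1}"
      by blast
    then have "Suc (r - 1) = card (insert z (Ucheb_node r ` {1..r - 1}))"
      using card_image[OF inj_on_Ucheb_node[of r]] by simp
    also have "\<dots> \<le> card {x::complex. poly (Ucheb (r - 1)) x = 0}"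
      using z Ucheb_node_root by (intro card_mono poly_roots_finite) auto
    also have "\<dots> \<le> r - 1"
      using card_poly_roots_bound[of "Ucheb (r - 1) :: complex poly"] by simp
    finally show False
      by simp
  qed
qed (use Ucheb_node_root in blast)

lemma Ucheb_node_orthogonality:
  assumes "m < r - 1" "n < r - 1"
  shows "(\<Sum>k=1..r - 1. poly (Ucheb m) (Ucheb_node r k) * poly (Ucheb n) (Ucheb_node r k)
                          / complex_of_real (Omega_value r k))
           = (if m = n then (-1) ^ n else 0)"
proof -
  define S where "S a k = sin (real a * node_angle r k)" for a k
  have r: "real r \<noteq> 0"
    using assms by auto
  have "poly (Ucheb m) (Ucheb_node r k) * poly (Ucheb n) (Ucheb_node r k) / complex_of_real (Omega_value r k)
      = \<i> ^ m * \<i> ^ n * complex_of_real (2 / real r * (S (Suc m) k * S (Suc n) k))"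
    if k: "k \<in> {1..r - 1}" for k
  proof -
    have "sin (node_angle r k) \<noteq> 0"
      using sin_node_angle_pos[OF k] by simp
    then have "S (Suc m) k / sin (node_angle r k) * (S (Suc n) k / sin (node_angle r k)) / Omega_value r k
        = 2 / real r * (S (Suc m) k * S (Suc n) k)"
      using r by (simp add: Omega_value_def field_simps power2_eq_square)
    moreover have "poly (Ucheb m) (Ucheb_node r k) * poly (Ucheb n) (Ucheb_node r k) / complex_of_real (Omega_value r k)
        = \<i> ^ m * \<i> ^ n * complex_of_real
            (S (Suc m) k / sin (node_angle r k) * (S (Suc n) k / sin (node_angle r k)) / Omega_value r k)"
      by (simp add: poly_Ucheb_node[OF k] S_def)
    ultimately show ?thesis
      by simp
  qed
  then have "(\<Sum>k=1..r - 1. poly (Ucheb m) (Ucheb_node r k) * poly (Ucheb n) (Ucheb_node r k)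
                             / complex_of_real (Omega_value r k))
      = \<i> ^ m * \<i> ^ n * complex_of_real (2 / real r * (\<Sum>k=1..r - 1. S (Suc m) k * S (Suc n) k))"
    by (simp add: sum_distrib_left del: of_real_mult)
  also have "(\<Sum>k=1..r - 1. S (Suc m) k * S (Suc n) k) = (if Suc m = Suc n then real r / 2 else 0)"
    unfolding S_def using assms by (intro sum_sin_mult_sin) auto
  also have "\<i> ^ m * \<i> ^ n * complex_of_real (2 / real r * (if Suc m = Suc n then real r / 2 else 0))
      = (if m = n then (-1) ^ n else 0)"
    using r by (simp flip: power_mult_distrib)
  finally show ?thesis .
qed

lemma sum_Ucheb_node_squares:
  assumes "k \<in> {1..r - 1}"
  shows "(\<Sum>n<r - 1. (-1) ^ n * poly (Ucheb n) (Ucheb_node r k) ^ 2) = complex_of_real (Omega_value r k)"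
proof -
  define S where "S a = sin (real k * node_angle r a)" for a
  define s where "s = sin (node_angle r k)"
  have "(-1) ^ n * poly (Ucheb n) (Ucheb_node r k) ^ 2 = complex_of_real (S (Suc n) * S (Suc n) / s ^ 2)" for n
  proof -
    have "(-1) ^ n * (\<i> ^ n) ^ 2 = (1::complex)"
      by (simp flip: power_mult power_mult_distrib)
    then have "(-1) ^ n * (\<i> ^ n * complex_of_real (sin (real (Suc n) * node_angle r k) / s)) ^ 2
        = complex_of_real (sin (real (Suc n) * node_angle r k) * sin (real (Suc n) * node_angle r k) / s ^ 2)"
      by (simp add: power_mult_distrib power2_eq_square)
    then show ?thesis
      using assms by (simp only: poly_Ucheb_node S_def s_def node_angle_mult_commute[of "Suc n"])
  qed
  then have "(\<Sum>n<r - 1. (-1) ^ n * poly (Ucheb n) (Ucheb_node r k) ^ 2)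
      = complex_of_real ((\<Sum>a=1..r - 1. S a * S a) / s ^ 2)"
    by (simp add: sum_divide_distrib sum.atLeast1_atMost_eq del: of_real_mult)
  also have "(\<Sum>a=1..r - 1. S a * S a) = real r / 2"
    unfolding S_def using sum_sin_mult_sin[of k r k] assms by simp
  finally show ?thesis
    by (simp add: s_def Omega_value_def)
qed

section \<open>Evaluation of the algebra at the nodes\<close>

lemma of_real_real_of_rat: "of_real (real_of_rat q) = (of_rat q :: 'a::real_field)"
  by (cases q) (simp add: of_rat_rat of_real_divide)

lemma map_poly_of_rat_add:
  "map_poly (of_rat :: rat \<Rightarrow> 'a::field_char_0) (p + q) = map_poly of_rat p + map_poly of_rat q"
  by (rule poly_eqI) (simp add: coeff_map_poly of_rat_add)

lemma map_poly_of_rat_mult: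
  "map_poly (of_rat :: rat \<Rightarrow> 'a::field_char_0) (p * q) = map_poly of_rat p * map_poly of_rat q"
  by (rule poly_eqI) (simp add: coeff_map_poly coeff_mult of_rat_sum of_rat_mult)

lemma map_poly_of_rat_diff:
  "map_poly (of_rat :: rat \<Rightarrow> 'a::field_char_0) (p - q) = map_poly of_rat p - map_poly of_rat q"
  by (rule poly_eqI) (simp add: coeff_map_poly of_rat_diff)

lemma map_poly_of_rat_smult:
  "map_poly (of_rat :: rat \<Rightarrow> 'a::field_char_0) (smult c p) = smult (of_rat c) (map_poly of_rat p)"
  by (rule poly_eqI) (simp add: coeff_map_poly of_rat_mult)

lemma map_poly_of_rat_Ucheb: "map_poly (of_rat :: rat \<Rightarrow> 'a::field_char_0) (Ucheb n) = Ucheb n"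
  by (induction n rule: Ucheb.induct) (simp_all add: map_poly_of_rat_add map_poly_of_rat_mult map_poly_pCons)

lemma Veval_0 [simp]: "Veval z 0 = 0"
  and Veval_1 [simp]: "Veval z 1 = 1"
  and Veval_add [simp]: "Veval z (p + q) = Veval z p + Veval z q"
  and Veval_diff [simp]: "Veval z (p - q) = Veval z p - Veval z q"
  and Veval_mult [simp]: "Veval z (p * q) = Veval z p * Veval z q"
  and Veval_smult [simp]: "Veval z (smult c p) = of_rat c * Veval z p"
  and Veval_monom [simp]: "Veval z (monom c j) = of_rat c * z ^ j"
  and Veval_Ucheb [simp]: "Veval z (Ucheb n) = poly (Ucheb n) z"
  by (simp_all add: Veval_def map_poly_of_rat_add map_poly_of_rat_diff map_poly_of_rat_mult
      map_poly_of_rat_smult map_poly_monom poly_monom map_poly_of_rat_Ucheb)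

lemma Veval_sum [simp]: "Veval z (\<Sum>i\<in>A. f i) = (\<Sum>i\<in>A. Veval z (f i))"
  by (induction A rule: infinite_finite_induct) simp_all

lemma Vcarrier_iff_coeff: "p \<in> Vcarrier r \<longleftrightarrow> (\<forall>j\<ge>r - 1. coeff p j = 0)"
proof
  assume "\<forall>j\<ge>r - 1. coeff p j = 0"
  then have "p = 0 \<or> coeff p (degree p) = 0 \<or> degree p < r - 1"
    by (meson not_le)
  then show "p \<in> Vcarrier r"
    by (auto simp: Vcarrier_def)
qed (auto simp: Vcarrier_def coeff_eq_0)

lemma Vcarrier_add: "a \<in> Vcarrier r \<Longrightarrow> b \<in> Vcarrier r \<Longrightarrow> a + b \<in> Vcarrier r"
  and Vcarrier_diff: "a \<in> Vcarrier r \<Longrightarrow> b \<in> Vcarrier r \<Longrightarrow> a - b \<in> Vcarrier r"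
  and Vcarrier_smult: "a \<in> Vcarrier r \<Longrightarrow> smult c a \<in> Vcarrier r"
  and Vcarrier_monom: "j < r - 1 \<Longrightarrow> monom c j \<in> Vcarrier r"
  and Vcarrier_Ucheb: "n < r - 1 \<Longrightarrow> Ucheb n \<in> Vcarrier r"
  by (simp_all add: Vcarrier_iff_coeff coeff_monom coeff_eq_0)

lemma mod_Ucheb_in_Vcarrier: "p mod Ucheb (r - 1) \<in> Vcarrier r"
  using degree_mod_less[of "Ucheb (r - 1)" p] by (auto simp: Vcarrier_def)

lemma mod_Ucheb_eq_self: "p \<in> Vcarrier r \<Longrightarrow> p mod Ucheb (r - 1) = p"
  by (auto simp: Vcarrier_def intro: mod_poly_less)

lemma Vmult_in_Vcarrier: "Vmult r a b \<in> Vcarrier r"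
  unfolding Vmult_def by (rule mod_Ucheb_in_Vcarrier)

lemma Vone_in_Vcarrier: "Vone r \<in> Vcarrier r"
  unfolding Vone_def by (rule mod_Ucheb_in_Vcarrier)

lemma Vpow_in_Vcarrier: "Vpow r a g \<in> Vcarrier r"
  by (cases g) (simp_all add: Vone_in_Vcarrier Vmult_in_Vcarrier)

lemma Vone_eq: "r \<ge> 2 \<Longrightarrow> Vone r = 1"
  unfolding Vone_def by (rule mod_Ucheb_eq_self) (simp add: Vcarrier_def)

lemma Ve_eq: "n < r - 1 \<Longrightarrow> Ve r n = Ucheb n"
  unfolding Ve_def by (intro mod_Ucheb_eq_self Vcarrier_Ucheb)

lemma Vmult_eq_mult: "a * b \<in> Vcarrier r \<Longrightarrow> Vmult r a b = a * b"
  unfolding Vmult_def by (rule mod_Ucheb_eq_self)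

lemma Veval_node_mod:
  assumes "k \<in> {1..r - 1}"
  shows "Veval (Ucheb_node r k) (p mod Ucheb (r - 1)) = Veval (Ucheb_node r k) p"
proof -
  have "Veval (Ucheb_node r k) p
      = Veval (Ucheb_node r k) (p div Ucheb (r - 1) * Ucheb (r - 1) + p mod Ucheb (r - 1))"
    by simp
  also have "\<dots> = Veval (Ucheb_node r k) (p mod Ucheb (r - 1))"
    by (simp only: Veval_add Veval_mult Veval_Ucheb Ucheb_node_root[OF assms]) simp
  finally show ?thesis ..
qed

lemma Veval_node_Vmult:
  "k \<in> {1..r - 1} \<Longrightarrow>
    Veval (Ucheb_node r k) (Vmult r a b) = Veval (Ucheb_node r k) a * Veval (Ucheb_node r k) b"
  unfolding Vmult_def by (simp only: Veval_node_mod Veval_mult)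

lemma Veval_node_Vone: "k \<in> {1..r - 1} \<Longrightarrow> Veval (Ucheb_node r k) (Vone r) = 1"
  unfolding Vone_def by (simp only: Veval_node_mod Veval_1)

lemma Veval_node_Ve: "k \<in> {1..r - 1} \<Longrightarrow> Veval (Ucheb_node r k) (Ve r n) = poly (Ucheb n) (Ucheb_node r k)"
  unfolding Ve_def by (simp only: Veval_node_mod Veval_Ucheb)

lemma Veval_node_Vpow:
  "k \<in> {1..r - 1} \<Longrightarrow> Veval (Ucheb_node r k) (Vpow r a g) = Veval (Ucheb_node r k) a ^ g"
  by (induction g) (simp_all add: Veval_node_Vone Veval_node_Vmult)

lemma Veval_node_VOmega:
  assumes "k \<in> {1..r - 1}"
  shows "Veval (Ucheb_node r k) (VOmega r) = complex_of_real (Omega_value r k)"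
  using assms sum_Ucheb_node_squares[OF assms]
  by (simp add: VOmega_def Veval_node_Vmult Veval_node_Ve power2_eq_square of_rat_power)

lemma Veval_VOmega_at_t:
  assumes "k \<in> {1..r - 1}" and t: "t = exp (\<i> * complex_of_real (real k * pi / real r))"
  shows "Veval (\<i> * (t + inverse t)) (VOmega r) = - 2 * of_nat r / (t - inverse t) ^ 2"
proof -
  have t: "t = cis (node_angle r k)"
    by (simp add: t cis_conv_exp node_angle_def)
  have "\<i> * (t + inverse t) = Ucheb_node r k"
    by (simp add: t Ucheb_node_def complex_eq_iff)
  moreover have "(t - inverse t) ^ 2 = - complex_of_real (4 * sin (node_angle r k) ^ 2)"
    by (simp add: t complex_eq_iff power2_eq_square)
  ultimately show ?thesis
    using sin_node_angle_pos[OF assms(1)]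
    by (simp add: Veval_node_VOmega[OF assms(1)] Omega_value_def field_simps)
qed

lemma Vcarrier_eqI:
  assumes "p \<in> Vcarrier r" "q \<in> Vcarrier r"
    and "\<And>k. k \<in> {1..r - 1} \<Longrightarrow> Veval (Ucheb_node r k) p = Veval (Ucheb_node r k) q"
  shows "p = q"
proof -
  define f where "f = map_poly (of_rat :: rat \<Rightarrow> complex) (p - q)"
  have "f = 0"
  proof (rule ccontr)
    assume "f \<noteq> 0"
    have "r - 1 = card (Ucheb_node r ` {1..r - 1})"
      using card_image[OF inj_on_Ucheb_node[of r]] by simp
    also have "\<dots> \<le> card {z. poly f z = 0}"
      using assms(3) \<open>f \<noteq> 0\<close>
      by (intro card_mono poly_roots_finite) (auto simp: f_def Veval_def map_poly_of_rat_diff)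
    also have "\<dots> \<le> degree f"
      using \<open>f \<noteq> 0\<close> by (rule card_poly_roots_bound)
    also have "\<dots> < r - 1"
      using \<open>f \<noteq> 0\<close> Vcarrier_diff[OF assms(1,2)] by (auto simp: f_def degree_map_poly Vcarrier_def)
    finally show False
      by simp
  qed
  then show ?thesis
    by (simp add: f_def map_poly_eq_0_iff)
qed

section \<open>Coordinates, counit and trace\<close>

lemma Ucheb_coefficient_formula:
  assumes f: "f = (\<Sum>m<r - 1. smult (c m) (Ucheb m))" and n: "n < r - 1"
  shows "of_rat (c n) = (-1) ^ n * (\<Sum>k=1..r - 1.
           Veval (Ucheb_node r k) f * poly (Ucheb n) (Ucheb_node r k) / complex_of_real (Omega_value r k))"
proof -
  have "(\<Sum>k=1..r - 1. Veval (Ucheb_node r k) f * poly (Ucheb n) (Ucheb_node r k) / complex_of_real (Omega_value r k))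
      = (\<Sum>k=1..r - 1. \<Sum>m<r - 1. of_rat (c m) * (poly (Ucheb m) (Ucheb_node r k) * poly (Ucheb n) (Ucheb_node r k)
                                     / complex_of_real (Omega_value r k)))"
    by (simp add: f sum_distrib_right sum_divide_distrib mult.assoc)
  also have "\<dots> = (\<Sum>m<r - 1. of_rat (c m) * (\<Sum>k=1..r - 1. poly (Ucheb m) (Ucheb_node r k)
                     * poly (Ucheb n) (Ucheb_node r k) / complex_of_real (Omega_value r k)))"
    by (subst sum.swap) (simp add: sum_distrib_left)
  also have "\<dots> = (\<Sum>m<r - 1. of_rat (c m) * (if m = n then (-1) ^ n else 0))"
    using n by (intro sum.cong refl) (simp add: Ucheb_node_orthogonality del: One_nat_def)
  also have "\<dots> = (\<Sum>m<r - 1. if m = n then of_rat (c n) * (-1) ^ n else 0)"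
    by (intro sum.cong) auto
  also have "\<dots> = of_rat (c n) * (-1) ^ n"
    using n by (simp del: One_nat_def)
  finally show ?thesis
    by (simp flip: power_add mult_2)
qed

lemma sum_smult_Ve: "(\<Sum>n<r - 1. smult (c n) (Ve r n)) = (\<Sum>n<r - 1. smult (c n) (Ucheb n))"
  by (intro sum.cong refl) (simp add: Ve_eq)

lemma Vcoord_eq:
  assumes c: "\<forall>n\<ge>r - 1. c n = 0" and f: "f = (\<Sum>n<r - 1. smult (c n) (Ucheb n))"
  shows "Vcoord r f = c"
  unfolding Vcoord_def
proof (rule the_equality)
  show "(\<forall>n\<ge>r - 1. c n = 0) \<and> f = (\<Sum>n<r - 1. smult (c n) (Ve r n))"
    using c f by (simp add: sum_smult_Ve del: One_nat_def)
next
  fix c' assume c': "(\<forall>n\<ge>r - 1. c' n = 0) \<and> f = (\<Sum>n<r - 1. smult (c' n) (Ve r n))"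
  show "c' = c"
  proof
    fix n
    show "c' n = c n"
    proof (cases "n < r - 1")
      case True
      have f': "f = (\<Sum>n<r - 1. smult (c' n) (Ucheb n))"
        using c' sum_smult_Ve[of c' r] by simp
      have "(of_rat (c' n) :: complex) = of_rat (c n)"
        unfolding Ucheb_coefficient_formula[OF f True] by (rule Ucheb_coefficient_formula[OF f' True])
      then show ?thesis
        by simp
    qed (use c c' in auto)
  qed
qed

lemma Vcoord_expansion:
  assumes "f \<in> Vcarrier r"
  shows "(\<forall>n\<ge>r - 1. Vcoord r f n = 0) \<and> f = (\<Sum>n<r - 1. smult (Vcoord r f n) (Ucheb n))"
proof -
  obtain c where c: "f = (\<Sum>n<r - 1. smult (c n) (Ucheb n))"
    using Ucheb_expansion assms Vcarrier_iff_coeff by blast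
  define c' where "c' n = (if n < r - 1 then c n else 0)" for n
  have f: "f = (\<Sum>n<r - 1. smult (c' n) (Ucheb n))"
    unfolding c by (intro sum.cong refl) (simp add: c'_def)
  then have "Vcoord r f = c'"
    by (intro Vcoord_eq) (auto simp: c'_def)
  then show ?thesis
    using f by (simp add: c'_def)
qed

lemma of_rat_Vcoord:
  assumes "f \<in> Vcarrier r" "n < r - 1"
  shows "of_rat (Vcoord r f n) = (-1) ^ n * (\<Sum>k=1..r - 1.
           Veval (Ucheb_node r k) f * poly (Ucheb n) (Ucheb_node r k) / complex_of_real (Omega_value r k))"
  using Ucheb_coefficient_formula[OF conjunct2[OF Vcoord_expansion[OF assms(1)]] assms(2)] .

lemma Vcoord_1:
  assumes "r \<ge> 2"
  shows "Vcoord r 1 = (\<lambda>n. if n = 0 then 1 else 0)"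
proof (rule Vcoord_eq)
  have "(\<Sum>n<r - 1. smult (if n = 0 then 1 else 0) (Ucheb n)) = (\<Sum>n<r - 1. if n = 0 then Ucheb n else 0)"
    by (intro sum.cong) auto
  also have "\<dots> = 1"
    using assms by (simp add: sum.delta' del: One_nat_def)
  finally show "1 = (\<Sum>n<r - 1. smult (if n = 0 then 1 else 0) (Ucheb n))" ..
qed (use assms in auto)

lemma of_rat_Vcounit:
  assumes "r \<ge> 2" "f \<in> Vcarrier r"
  shows "of_rat (Vcounit r f) = (\<Sum>k=1..r - 1. Veval (Ucheb_node r k) f / complex_of_real (Omega_value r k))"
proof -
  have "Vcounit r f = (\<Sum>n<r - 1. (-1) ^ n * Vcoord r f n * (if n = 0 then 1 else 0))"
    using assms(1) by (simp add: Vcounit_def Veta_def Ve_eq Vcoord_1 del: One_nat_def)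
  also have "\<dots> = (\<Sum>n<r - 1. if n = 0 then Vcoord r f n else 0)"
    by (intro sum.cong) auto
  also have "\<dots> = Vcoord r f 0"
    using assms(1) by (simp add: sum.delta' del: One_nat_def)
  finally have "Vcounit r f = Vcoord r f 0" .
  then show ?thesis
    using assms of_rat_Vcoord[of f r 0] by simp
qed

lemma of_rat_Vtrace: "of_rat (Vtrace r a) = (\<Sum>k=1..r - 1. Veval (Ucheb_node r k) a)"
proof -
  have "of_rat (Vtrace r a) = (\<Sum>n<r - 1. (-1) ^ n * (\<Sum>k=1..r - 1.
          Veval (Ucheb_node r k) a * poly (Ucheb n) (Ucheb_node r k) ^ 2 / complex_of_real (Omega_value r k)))"
    unfolding Vtrace_def of_rat_sum
    by (intro sum.cong refl)
       (simp add: of_rat_Vcoord Vmult_in_Vcarrier Veval_node_Vmult Veval_node_Ve power2_eq_square mult.assoc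
         del: One_nat_def)
  also have "\<dots> = (\<Sum>n<r - 1. \<Sum>k=1..r - 1. Veval (Ucheb_node r k) a / complex_of_real (Omega_value r k)
                     * ((-1) ^ n * poly (Ucheb n) (Ucheb_node r k) ^ 2))"
    by (simp add: sum_distrib_left mult_ac)
  also have "\<dots> = (\<Sum>k=1..r - 1. \<Sum>n<r - 1. Veval (Ucheb_node r k) a / complex_of_real (Omega_value r k)
                     * ((-1) ^ n * poly (Ucheb n) (Ucheb_node r k) ^ 2))"
    by (rule sum.swap)
  also have "\<dots> = (\<Sum>k=1..r - 1. Veval (Ucheb_node r k) a / complex_of_real (Omega_value r k)
                     * (\<Sum>n<r - 1. (-1) ^ n * poly (Ucheb n) (Ucheb_node r k) ^ 2))"
    by (simp add: sum_distrib_left)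
  also have "\<dots> = (\<Sum>k=1..r - 1. Veval (Ucheb_node r k) a)"
  proof (intro sum.cong refl)
    fix k assume k: "k \<in> {1..r - 1}"
    show "Veval (Ucheb_node r k) a / complex_of_real (Omega_value r k)
            * (\<Sum>n<r - 1. (-1) ^ n * poly (Ucheb n) (Ucheb_node r k) ^ 2) = Veval (Ucheb_node r k) a"
      using Omega_value_pos[OF k] by (simp only: sum_Ucheb_node_squares[OF k]) simp
  qed
  finally show ?thesis .
qed

lemma Ucheb_node_square_plus_4: "Ucheb_node r k ^ 2 + 4 = complex_of_real (4 * sin (node_angle r k) ^ 2)"
proof -
  have "Ucheb_node r k ^ 2 + 4 = complex_of_real (4 * (1 - cos (node_angle r k) ^ 2))"
    by (simp add: Ucheb_node_def power_mult_distrib algebra_simps)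
  then show ?thesis
    by (simp add: sin_squared_eq)
qed

lemma VOmega_invertible:
  assumes "r \<ge> 2"
  shows "\<exists>!b. b \<in> Vcarrier r \<and> Vmult r (VOmega r) b = Vone r"
proof -
  have Veval_inverse: "Veval (Ucheb_node r k) b = 1 / complex_of_real (Omega_value r k)"
    if "Vmult r (VOmega r) b = Vone r" "k \<in> {1..r - 1}" for b k
    using arg_cong[OF that(1), of "Veval (Ucheb_node r k)"] Omega_value_pos[OF that(2)] that(2)
    by (simp add: Veval_node_Vmult Veval_node_VOmega Veval_node_Vone field_simps)
  define b :: "rat poly" where "b = smult (1 / (2 * of_nat r)) ((monom 1 2 + monom 4 0) mod Ucheb (r - 1))"
  \<comment> \<open>The inverse is \<open>(e\<^sub>1\<^sup>2 + 4) / 2r\<close>, because \<open>\<Omega>(z) = 2r / (z\<^sup>2 + 4)\<close>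
    at every node \<open>z\<close>.\<close>
  have "Vmult r (VOmega r) b = Vone r"
  proof (rule Vcarrier_eqI[OF Vmult_in_Vcarrier Vone_in_Vcarrier])
    fix k assume k: "k \<in> {1..r - 1}"
    have "sin (node_angle r k) \<noteq> 0"
      using sin_node_angle_pos[OF k] by simp
    then show "Veval (Ucheb_node r k) (Vmult r (VOmega r) b) = Veval (Ucheb_node r k) (Vone r)"
      using k assms Ucheb_node_square_plus_4[of r k]
      by (simp add: b_def Veval_node_Vmult Veval_node_VOmega Veval_node_Vone Veval_node_mod Omega_value_def
          of_rat_divide of_rat_mult field_simps del: One_nat_def)
  qed
  moreover have "b \<in> Vcarrier r"
    unfolding b_def by (intro Vcarrier_smult mod_Ucheb_in_Vcarrier)
  ultimately show ?thesis
    using Veval_inverse by (auto intro: Vcarrier_eqI)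
qed

lemma Veval_node_Vinv_VOmega:
  assumes "r \<ge> 2" "k \<in> {1..r - 1}"
  shows "Veval (Ucheb_node r k) (Vinv r (VOmega r)) = 1 / complex_of_real (Omega_value r k)"
proof -
  have "Vmult r (VOmega r) (Vinv r (VOmega r)) = Vone r"
    unfolding Vinv_def using theI'[OF VOmega_invertible[OF assms(1)]] by blast
  from arg_cong[OF this, of "Veval (Ucheb_node r k)"] show ?thesis
    using Omega_value_pos[OF assms(2)] assms(2)
    by (simp add: Veval_node_Vmult Veval_node_VOmega Veval_node_Vone field_simps)
qed

lemma Veval_node_Vzpow_VOmega:
  assumes "r \<ge> 2" "k \<in> {1..r - 1}"
  shows "Veval (Ucheb_node r k) (Vzpow r (VOmega r) m) = complex_of_real (Omega_value r k powi m)"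
proof (cases "m \<ge> 0")
  case True
  then show ?thesis
    using assms by (simp add: Vzpow_def Veval_node_Vpow Veval_node_VOmega power_int_def)
next
  case False
  then show ?thesis
    using assms
    by (simp add: Vzpow_def Veval_node_Vpow Veval_node_Vinv_VOmega power_int_def power_inverse inverse_eq_divide)
qed

lemma real_of_rat_Vtrace_Vzpow_VOmega_sum:
  assumes "r \<ge> 2"
  shows "real_of_rat (Vtrace r (Vzpow r (VOmega r) m)) = (\<Sum>k=1..r - 1. Omega_value r k powi m)"
proof -
  have "complex_of_real (real_of_rat (Vtrace r (Vzpow r (VOmega r) m)))
      = complex_of_real (\<Sum>k=1..r - 1. Omega_value r k powi m)"
    unfolding of_real_real_of_rat of_rat_Vtrace of_real_sum
    using assms by (intro sum.cong refl) (simp add: Veval_node_Vzpow_VOmega del: One_nat_def)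
  then show ?thesis
    by (simp only: of_real_eq_iff)
qed

lemma real_of_rat_Vcounit_Vpow_VOmega:
  assumes "r \<ge> 2"
  shows "real_of_rat (Vcounit r (Vpow r (VOmega r) g)) = (\<Sum>k=1..r - 1. Omega_value r k powi (int g - 1))"
proof -
  have "complex_of_real (real_of_rat (Vcounit r (Vpow r (VOmega r) g)))
      = complex_of_real (\<Sum>k=1..r - 1. Omega_value r k powi (int g - 1))"
    unfolding of_real_real_of_rat of_rat_Vcounit[OF assms Vpow_in_Vcarrier] of_real_sum
  proof (intro sum.cong refl)
    fix k assume k: "k \<in> {1..r - 1}"
    show "Veval (Ucheb_node r k) (Vpow r (VOmega r) g) / complex_of_real (Omega_value r k)
        = complex_of_real (Omega_value r k powi (int g - 1))"
      using Omega_value_pos[OF k] k by (simp add: Veval_node_Vpow Veval_node_VOmega power_int_diff)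
  qed
  then show ?thesis
    by (simp only: of_real_eq_iff)
qed

lemma Omega_value_powi:
  assumes "k \<in> {1..r - 1}"
  shows "Omega_value r k powi m = (real r / 2) powi m * sin (node_angle r k) powi (- 2 * m)"
  using sin_node_angle_pos[OF assms]
  by (simp add: Omega_value_def power_int_divide_distrib power_int_mult_distrib power_int_power
      power_int_minus_divide mult.commute)

lemma real_of_rat_Vtrace_Vzpow_VOmega_sin:
  assumes "r \<ge> 2"
  shows "real_of_rat (Vtrace r (Vzpow r (VOmega r) m))
           = (real r / 2) powi m * (\<Sum>k=1..r - 1. sin (real k * pi / real r) powi (- 2 * m))"
  unfolding real_of_rat_Vtrace_Vzpow_VOmega_sum[OF assms] sum_distrib_left
  by (intro sum.cong refl) (simp add: Omega_value_powi node_angle_def del: One_nat_def)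

lemma Vcounit_Vpow_VOmega_eq_Vtrace:
  assumes "r \<ge> 2"
  shows "Vcounit r (Vpow r (VOmega r) g) = Vtrace r (Vzpow r (VOmega r) (int g - 1))"
  using real_of_rat_Vcounit_Vpow_VOmega[OF assms, of g]
    real_of_rat_Vtrace_Vzpow_VOmega_sum[OF assms, of "int g - 1"]
  by (metis of_rat_eq_iff)

lemma coeff_sum_Ucheb_eq_0:
  fixes c :: "nat \<Rightarrow> 'a::comm_ring_1"
  assumes "\<And>n. c n \<noteq> 0 \<Longrightarrow> odd (n + j)"
  shows "coeff (\<Sum>n<m. smult (c n) (Ucheb n)) j = 0"
proof -
  have "c n * coeff (Ucheb n) j = 0" for n
    using assms[of n] coeff_Ucheb_parity[of n j, where 'a='a] by (cases "c n = 0") auto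
  then show ?thesis
    by (simp add: coeff_sum)
qed

lemma Vcoord_odd_eq_0_iff:
  assumes "f \<in> Vcarrier r"
  shows "(\<forall>n. odd n \<longrightarrow> Vcoord r f n = 0) \<longleftrightarrow> (\<forall>j. odd j \<longrightarrow> coeff f j = 0)"
proof -
  define c where "c = Vcoord r f"
  have beyond: "\<forall>n\<ge>r - 1. c n = 0" and f: "f = (\<Sum>n<r - 1. smult (c n) (Ucheb n))"
    using Vcoord_expansion[OF assms] by (simp_all add: c_def)
  show ?thesis
  proof
    assume odd_c: "\<forall>n. odd n \<longrightarrow> Vcoord r f n = 0"
    show "\<forall>j. odd j \<longrightarrow> coeff f j = 0"
    proof (intro allI impI)
      fix j :: nat assume "odd j"
      show "coeff f j = 0"
        unfolding f by (intro coeff_sum_Ucheb_eq_0) (use odd_c \<open>odd j\<close> in \<open>auto simp: c_def\<close>)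
    qed
  next
    assume even_f: "\<forall>j. odd j \<longrightarrow> coeff f j = 0"
    define odd_part where "odd_part n = (if odd n \<and> n < r - 1 then c n else 0)" for n
    define even_part where "even_part n = (if odd n then 0 else c n)" for n
    define g where "g = (\<Sum>n<r - 1. smult (odd_part n) (Ucheb n))"
    have f_split: "f = g + (\<Sum>n<r - 1. smult (even_part n) (Ucheb n))"
      unfolding f g_def by (simp flip: sum.distrib smult_add_left)
        (intro sum.cong refl, simp add: odd_part_def even_part_def)
    have "coeff g j = 0" for j
    proof (cases "even j")
      case True
      then show ?thesis
        unfolding g_def by (intro coeff_sum_Ucheb_eq_0) (simp add: odd_part_def split: if_splits)
    next
      case False
      have "coeff (\<Sum>n<r - 1. smult (even_part n) (Ucheb n)) j = 0"
        using False by (intro coeff_sum_Ucheb_eq_0) (simp add: even_part_def split: if_splits)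
      then show ?thesis
        using even_f False arg_cong[OF f_split, of "\<lambda>p. coeff p j"] by simp
    qed
    then have "g = 0"
      by (simp add: poly_eqI)
    then have "Vcoord r 0 = odd_part" and "Vcoord r 0 = (\<lambda>_. 0)"
      by (intro Vcoord_eq; simp add: g_def odd_part_def)+
    then show "\<forall>n. odd n \<longrightarrow> Vcoord r f n = 0"
      using beyond by (auto simp: c_def odd_part_def fun_eq_iff split: if_splits) (meson not_le)
  qed
qed

lemma Vplus_eq: "Vplus r = {f \<in> Vcarrier r. \<forall>j. odd j \<longrightarrow> coeff f j = 0}"
  using Vcoord_odd_eq_0_iff by (auto simp: Vplus_def)

section \<open>Embeddings\<close>

definition Xpow_span :: "nat \<Rightarrow> nat \<Rightarrow> rat poly set" where
  "Xpow_span r d = {a \<in> Vcarrier r. \<forall>j. \<not> d dvd j \<longrightarrow> coeff a j = 0}"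

lemma Xpow_span_1: "Xpow_span r 1 = Vcarrier r"
  by (simp add: Xpow_span_def)

lemma Vplus_eq_Xpow_span_2: "Vplus r = Xpow_span r 2"
  by (simp add: Vplus_eq Xpow_span_def)

lemma Xpow_span_0: "0 \<in> Xpow_span r d"
  and Xpow_span_add: "a \<in> Xpow_span r d \<Longrightarrow> b \<in> Xpow_span r d \<Longrightarrow> a + b \<in> Xpow_span r d"
  and Xpow_span_smult: "a \<in> Xpow_span r d \<Longrightarrow> smult c a \<in> Xpow_span r d"
  and Xpow_span_monom: "d * j < r - 1 \<Longrightarrow> monom c (d * j) \<in> Xpow_span r d"
  by (auto simp: Xpow_span_def Vcarrier_iff_coeff coeff_monom)

lemma Xpow_span_expansion:
  assumes "a \<in> Xpow_span r d" "r - 1 = d * M" "0 < d"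
  shows "a = (\<Sum>j<M. smult (coeff a (d * j)) (monom 1 (d * j)))"
proof (rule poly_eqI)
  fix i
  have a: "coeff a i = 0" if "\<not> d dvd i \<or> i \<ge> r - 1"
    using assms(1) that by (auto simp: Xpow_span_def Vcarrier_iff_coeff)
  have "coeff (\<Sum>j<M. smult (coeff a (d * j)) (monom 1 (d * j))) i
      = (\<Sum>j<M. if j = i div d \<and> d dvd i then coeff a i else 0)"
    using assms(3) by (auto simp: coeff_sum coeff_monom intro!: sum.cong)
  also have "\<dots> = coeff a i"
  proof (cases "d dvd i \<and> i div d < M")
    case True
    then show ?thesis
      by simp
  next
    case False
    then have "\<not> d dvd i \<or> i \<ge> r - 1"
      using assms(2,3) by (auto simp: dvd_def)
    then show ?thesis
      using False a by auto
  qed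
  finally show "coeff a i = coeff (\<Sum>j<M. smult (coeff a (d * j)) (monom 1 (d * j))) i" ..
qed

lemma Veval_Xpow_span:
  assumes "a \<in> Xpow_span r d" "r - 1 = d * M" "0 < d"
  shows "Veval z a = (\<Sum>j<M. of_rat (coeff a (d * j)) * (z ^ d) ^ j)"
  by (subst Xpow_span_expansion[OF assms]) (simp add: power_mult)

lemma is_embedding_on_sum:
  assumes emb: "is_embedding_on r S \<phi>"
    and S: "0 \<in> S" "\<And>a b. a \<in> S \<Longrightarrow> b \<in> S \<Longrightarrow> a + b \<in> S" "\<And>c a. a \<in> S \<Longrightarrow> smult c a \<in> S"
    and B: "\<And>i. i \<in> A \<Longrightarrow> B i \<in> S" and A: "finite A"
  shows "(\<Sum>i\<in>A. smult (c i) (B i)) \<in> S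
           \<and> \<phi> (\<Sum>i\<in>A. smult (c i) (B i)) = (\<Sum>i\<in>A. of_rat (c i) * \<phi> (B i))"
  using A B
proof (induction A rule: finite_induct)
  case empty
  have "\<phi> (0 + 0) = \<phi> 0 + \<phi> 0"
    using emb S(1) unfolding is_embedding_on_def by blast
  then show ?case
    using S(1) by simp
next
  case (insert i A)
  then show ?case
    using emb S by (simp add: is_embedding_on_def)
qed

lemma embedding_on_Xpow_span_monom:
  assumes emb: "is_embedding_on r (Xpow_span r d) \<phi>" and "r \<ge> 2" "d * j < r - 1"
  shows "\<phi> (monom 1 (d * j)) = \<phi> (monom 1 d) ^ j"
  using assms(3)
proof (induction j)
  case 0
  then show ?case
    using emb \<open>r \<ge> 2\<close> by (simp add: is_embedding_on_def Vone_eq monom_0 one_pCons)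
next
  case (Suc j)
  have mem: "monom 1 d \<in> Xpow_span r d" "monom 1 (d * j) \<in> Xpow_span r d"
    using Suc.prems Xpow_span_monom[of d 1 r] Xpow_span_monom[of d j r] by (auto simp: le_less_trans)
  have "monom 1 (d * Suc j) = Vmult r (monom 1 d) (monom 1 (d * j))"
    using Suc.prems by (simp add: Vmult_eq_mult Vcarrier_monom mult_monom)
  then show ?case
    using emb mem Suc by (simp add: is_embedding_on_def)
qed

lemma embedding_on_Xpow_span_eq_Veval:
  assumes emb: "is_embedding_on r (Xpow_span r d) \<phi>" and "r \<ge> 2" "0 < d" "r - 1 = d * M"
    and z: "z ^ d = \<phi> (monom 1 d)" and a: "a \<in> Xpow_span r d"
  shows "\<phi> a = Veval z a"
proof -
  have "\<phi> a = \<phi> (\<Sum>j<M. smult (coeff a (d * j)) (monom 1 (d * j)))"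
    using Xpow_span_expansion[OF a assms(4,3)] by simp
  also have "\<dots> = (\<Sum>j<M. of_rat (coeff a (d * j)) * \<phi> (monom 1 (d * j)))"
  proof -
    have "monom 1 (d * j) \<in> Xpow_span r d" if "j < M" for j
      using that assms(3,4) by (intro Xpow_span_monom) simp
    then show ?thesis
      using is_embedding_on_sum[OF emb Xpow_span_0 Xpow_span_add Xpow_span_smult,
          of "{..<M}" "\<lambda>j. monom 1 (d * j)" "\<lambda>j. coeff a (d * j)"] by simp
  qed
  also have "\<dots> = (\<Sum>j<M. of_rat (coeff a (d * j)) * (z ^ d) ^ j)"
  proof (intro sum.cong refl)
    fix j assume "j \<in> {..<M}"
    then have "d * j < r - 1"
      using assms(3,4) by simp
    then show "of_rat (coeff a (d * j)) * \<phi> (monom 1 (d * j)) = of_rat (coeff a (d * j)) * (z ^ d) ^ j"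
      by (simp add: embedding_on_Xpow_span_monom[OF emb \<open>r \<ge> 2\<close>] z)
  qed
  also have "\<dots> = Veval z a"
    using Veval_Xpow_span[OF a assms(4,3)] by simp
  finally show ?thesis .
qed

lemma embedding_on_Xpow_span_Ucheb_root:
  assumes emb: "is_embedding_on r (Xpow_span r d) \<phi>" and "r \<ge> 2" "0 < d" "r - 1 = d * M" "2 \<le> M"
    and z: "z ^ d = \<phi> (monom 1 d)"
    and U: "\<And>j. \<not> d dvd j \<Longrightarrow> coeff (Ucheb (r - 1) :: rat poly) j = 0"
  shows "poly (Ucheb (r - 1)) z = 0"
proof -
  note eval = embedding_on_Xpow_span_eq_Veval[OF emb assms(2-4) z]
  define R :: "rat poly" where "R = monom 1 (r - 1) - Ucheb (r - 1)"
  have "R \<in> Xpow_span r d"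
    using U assms(3,4) by (auto simp: R_def Xpow_span_def Vcarrier_iff_coeff coeff_monom coeff_eq_0 le_less)
  have mem: "monom 1 d \<in> Xpow_span r d" "monom 1 (d * (M - 1)) \<in> Xpow_span r d"
    using assms(3-5) Xpow_span_monom[of d 1 r 1] Xpow_span_monom[of d "M - 1" r 1] by auto
  have "monom 1 d * monom 1 (d * (M - 1)) = monom (1::rat) (r - 1)"
    using assms(4,5) by (simp add: mult_monom algebra_simps)
  moreover have "monom 1 (r - 1) mod Ucheb (r - 1) = R"
  proof -
    have "monom 1 (r - 1) mod Ucheb (r - 1) = (R + Ucheb (r - 1)) mod Ucheb (r - 1)"
      by (simp add: R_def)
    also have "\<dots> = R mod Ucheb (r - 1)"
      by simp
    also have "\<dots> = R"
      using \<open>R \<in> Xpow_span r d\<close> unfolding Xpow_span_def by (intro mod_Ucheb_eq_self) simp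
    finally show ?thesis .
  qed
  ultimately have "Vmult r (monom 1 d) (monom 1 (d * (M - 1))) = R"
    by (simp add: Vmult_def)
  moreover have "\<phi> (Vmult r (monom 1 d) (monom 1 (d * (M - 1)))) = \<phi> (monom 1 d) * \<phi> (monom 1 (d * (M - 1)))"
    using emb mem unfolding is_embedding_on_def by blast
  ultimately have "\<phi> R = Veval z (monom 1 d) * Veval z (monom 1 (d * (M - 1)))"
    using eval[OF mem(1)] eval[OF mem(2)] by simp
  also have "\<dots> = z ^ (r - 1)"
    using assms(4,5) by (simp flip: power_add) (simp add: algebra_simps)
  finally have "\<phi> R = z ^ (r - 1)" .
  moreover have "\<phi> R = z ^ (r - 1) - poly (Ucheb (r - 1)) z"
    using eval[OF \<open>R \<in> Xpow_span r d\<close>] by (simp add: R_def)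
  ultimately show ?thesis
    by simp
qed

lemma is_embedding_on_Veval_node:
  assumes "k \<in> {1..r - 1}"
  shows "is_embedding_on r (Vcarrier r) (Veval (Ucheb_node r k))"
  using assms by (simp add: is_embedding_on_def Veval_node_Vone Veval_node_Vmult)

lemma is_embedding_on_Vcarrier_iff:
  assumes "r \<ge> 3"
  shows "is_embedding_on r (Vcarrier r) \<phi>
           \<longleftrightarrow> (\<exists>k\<in>{1..r - 1}. \<forall>a\<in>Vcarrier r. \<phi> a = Veval (Ucheb_node r k) a)"
proof
  assume emb: "is_embedding_on r (Vcarrier r) \<phi>"
  then have emb1: "is_embedding_on r (Xpow_span r 1) \<phi>"
    by (simp only: Xpow_span_1)
  define z where "z = \<phi> (monom 1 1)"
  have "r \<ge> 2" "r - 1 = 1 * (r - 1)" "2 \<le> r - 1" "z ^ 1 = \<phi> (monom 1 1)"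
    using assms by (simp_all add: z_def)
  note facts = emb1 this(1) zero_less_one this(2-)
  have "poly (Ucheb (r - 1)) z = 0"
    using embedding_on_Xpow_span_Ucheb_root[OF facts] by simp
  then obtain k where "k \<in> {1..r - 1}" "z = Ucheb_node r k"
    using Ucheb_roots by blast
  moreover have "\<forall>a\<in>Vcarrier r. \<phi> a = Veval z a"
    using embedding_on_Xpow_span_eq_Veval[OF facts(1-4) facts(6)] unfolding Xpow_span_1 by blast
  ultimately show "\<exists>k\<in>{1..r - 1}. \<forall>a\<in>Vcarrier r. \<phi> a = Veval (Ucheb_node r k) a"
    by blast
next
  assume "\<exists>k\<in>{1..r - 1}. \<forall>a\<in>Vcarrier r. \<phi> a = Veval (Ucheb_node r k) a"
  then obtain k where k: "k \<in> {1..r - 1}" and eq: "\<forall>a\<in>Vcarrier r. \<phi> a = Veval (Ucheb_node r k) a"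
    by blast
  then show "is_embedding_on r (Vcarrier r) \<phi>"
    using is_embedding_on_Veval_node[OF k]
    by (simp add: is_embedding_on_def Vone_in_Vcarrier Vmult_in_Vcarrier Vcarrier_add Vcarrier_smult)
qed

lemma Vplus_embedding_real:
  assumes "r \<ge> 3" "odd r" and emb: "is_embedding_on r (Vplus r) \<psi>" and a: "a \<in> Vplus r"
  shows "\<psi> a \<in> \<real>"
proof -
  obtain M where M: "r - 1 = 2 * M"
    using assms(1,2) by (metis odd_two_times_div_two_nat)
  have emb2: "is_embedding_on r (Xpow_span r 2) \<psi>" and a2: "a \<in> Xpow_span r 2"
    using emb a by (simp_all add: Vplus_eq_Xpow_span_2)
  define z where "z = csqrt (\<psi> (monom 1 2))"
  have z: "z ^ 2 = \<psi> (monom 1 2)"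
    by (simp add: z_def)
  have "r \<ge> 2"
    using assms(1) by simp
  note facts = emb2 this zero_less_numeral M z
  have "z ^ 2 \<in> \<real> \<or> M = 1"
  proof (cases "M = 1")
    case False
    then have "2 \<le> M"
      using M assms(1) by simp
    moreover have "\<not> 2 dvd j \<Longrightarrow> coeff (Ucheb (r - 1) :: rat poly) j = 0" for j
      using M by (intro coeff_Ucheb_parity) simp
    ultimately have "poly (Ucheb (r - 1)) z = 0"
      using embedding_on_Xpow_span_Ucheb_root[OF facts(1-4) _ facts(5)] by blast
    then obtain k where "z = Ucheb_node r k"
      using Ucheb_roots by blast
    then show ?thesis
      by (simp add: Ucheb_node_def power_mult_distrib)
  qed simp
  moreover have "\<psi> a = (\<Sum>j<M. of_rat (coeff a (2 * j)) * (z ^ 2) ^ j)"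
    using embedding_on_Xpow_span_eq_Veval[OF facts a2] Veval_Xpow_span[OF a2 M] by simp
  moreover have "(of_rat q :: complex) \<in> \<real>" for q
    by (metis of_real_real_of_rat Reals_of_real)
  ultimately show ?thesis
    by (cases "M = 1") (auto intro!: sum_in_Reals Reals_mult Reals_power[of "z ^ 2"])
qed

theorem mainTheorem10:
  fixes r :: nat
  assumes "r \<ge> 3" and "odd r"
  shows
    "(\<forall>\<phi>. is_embedding_on r (Vcarrier r) \<phi> \<longleftrightarrow>
        (\<exists>k\<in>{1..r - 1}. \<forall>a\<in>Vcarrier r.
            \<phi> a = Veval (2 * \<i> * complex_of_real (cos (real k * pi / real r))) a))
   \<and> (\<forall>\<psi>. is_embedding_on r (Vplus r) \<psi> \<longrightarrow> (\<forall>a\<in>Vplus r. \<psi> a \<in> \<real>))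
   \<and> (\<forall>g::nat.
        Vcounit r (Vpow r (VOmega r) g) = Vtrace r (Vzpow r (VOmega r) (int g - 1))
      \<and> real_of_rat (Vtrace r (Vzpow r (VOmega r) (int g - 1)))
          = (real r / 2) powi (int g - 1) *
            (\<Sum>k=1..r - 1. sin (real k * pi / real r) powi (2 - 2 * int g)))
   \<and> (\<forall>k\<in>{1..r - 1}. let t = exp (\<i> * of_real (real k * pi / real r)) in
        Veval (\<i> * (t + inverse t)) (VOmega r) = - 2 * of_nat r / (t - inverse t)^2)"
proof -
  have r: "r \<ge> 2"
    using assms(1) by simp
  have "- 2 * (int g - 1) = 2 - 2 * int g" for g
    by simp
  then show ?thesis
    using is_embedding_on_Vcarrier_iff[OF assms(1)] Vplus_embedding_real[OF assms]
      Vcounit_Vpow_VOmega_eq_Vtrace[OF r] real_of_rat_Vtrace_Vzpow_VOmega_sin[OF r] Veval_VOmega_at_t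
    by (simp add: Ucheb_node_def node_angle_def Let_def)
qed

end
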